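(* Let $\mathcal{C}$ be a bicomplete category and let $\mathscr{E}'$ be the totally ordered category with three objects $\varnothing\to E\to *$. Let $F:\mathcal{C}\to\mathscr{E}'$ be any functor. Then the following defines a model structure $\mathbb{C}^F$ on $\mathcal{C}$: \[\mathbb{C}^F_{cof}=\{A\to B : F(B)\neq\varnothing\}\cup\mathrm{iso}\,\mathcal{C},\qquad \mathbb{C}^F_{fib}=\{X\to Y : F(X)\neq *\}\cup\mathrm{iso}\,\mathcal{C},\] \[\mathbb{C}^F_{we}=\{f : F(f)=1_\varnothing \text{ or } F(f)=1_*\}\cup\mathrm{iso}\,\mathcal{C}.\]
   Context: Bicomplete means having all finite limits and finite colimits; $\mathrm{iso}\,\mathcal{C}$ denotes the isomorphisms of $\mathcal{C}$. A model structure is a triple (weak equivalences, cofibrations, fibrations) of subcategories such that (cof, fib $\cap$ we) and (cof $\cap$ we, fib) are weak factorization systems (pairs $(\mathcal{L},\mathcal{R})$ with $\mathcal{L}$ = maps with left lifting property against $\mathcal{R}$, $\mathcal{R}$ = maps with right lifting property against $\mathcal{L}$, and every map factoring as an $\mathcal{L}$-map followed by an $\mathcal{R}$-map), and weak equivalences satisfy two-out-of-three. *)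

theory Defs
  imports Main
begin

record ('o, 'a) category =
  cobj  :: "'o set"
  carr  :: "'a set"
  cdom  :: "'a \<Rightarrow> 'o"
  ccod  :: "'a \<Rightarrow> 'o"
  cid   :: "'o \<Rightarrow> 'a"
  ccomp :: "'a \<Rightarrow> 'a \<Rightarrow> 'a"   (* ccomp C g f = g o f *)

definition category :: "('o, 'a) category \<Rightarrow> bool" where
  "category C \<longleftrightarrow>
     (\<forall>f\<in>carr C. cdom C f \<in> cobj C \<and> ccod C f \<in> cobj C) \<and>
     (\<forall>x\<in>cobj C. cid C x \<in> carr C \<and> cdom C (cid C x) = x \<and> ccod C (cid C x) = x) \<and>
     (\<forall>f\<in>carr C. \<forall>g\<in>carr C. ccod C f = cdom C g \<longrightarrow>
        ccomp C g f \<in> carr C \<and> cdom C (ccomp C g f) = cdom C f \<and> ccod C (ccomp C g f) = ccod C g) \<and>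
     (\<forall>f\<in>carr C. ccomp C f (cid C (cdom C f)) = f \<and> ccomp C (cid C (ccod C f)) f = f) \<and>
     (\<forall>f\<in>carr C. \<forall>g\<in>carr C. \<forall>h\<in>carr C. ccod C f = cdom C g \<and> ccod C g = cdom C h \<longrightarrow>
        ccomp C h (ccomp C g f) = ccomp C (ccomp C h g) f)"

definition hom :: "('o, 'a) category \<Rightarrow> 'o \<Rightarrow> 'o \<Rightarrow> 'a set" where
  "hom C x y = {f \<in> carr C. cdom C f = x \<and> ccod C f = y}"

definition iso :: "('o, 'a) category \<Rightarrow> 'a set" where
  "iso C = {f \<in> carr C. \<exists>g \<in> hom C (ccod C f) (cdom C f).
              ccomp C g f = cid C (cdom C f) \<and> ccomp C f g = cid C (ccod C f)}"

definition "functor" :: "('o, 'a) category \<Rightarrow> ('p, 'b) category \<Rightarrow> ('o \<Rightarrow> 'p) \<Rightarrow> ('a \<Rightarrow> 'b) \<Rightarrow> bool" where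
  "functor C D F0 F1 \<longleftrightarrow>
     (\<forall>x\<in>cobj C. F0 x \<in> cobj D) \<and>
     (\<forall>f\<in>carr C. F1 f \<in> hom D (F0 (cdom C f)) (F0 (ccod C f))) \<and>
     (\<forall>x\<in>cobj C. F1 (cid C x) = cid D (F0 x)) \<and>
     (\<forall>f\<in>carr C. \<forall>g\<in>carr C. ccod C f = cdom C g \<longrightarrow> F1 (ccomp C g f) = ccomp D (F1 g) (F1 f))"

text \<open>Finite diagrams are indexed by finite categories whose objects and arrows are natural
numbers; every finite category is isomorphic to such a one.\<close>

definition cone :: "('o, 'a) category \<Rightarrow> (nat, nat) category \<Rightarrow> (nat \<Rightarrow> 'o) \<Rightarrow> (nat \<Rightarrow> 'a)
                     \<Rightarrow> 'o \<Rightarrow> (nat \<Rightarrow> 'a) \<Rightarrow> bool" where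
  "cone C J D0 D1 L \<pi> \<longleftrightarrow> L \<in> cobj C \<and>
     (\<forall>j\<in>cobj J. \<pi> j \<in> hom C L (D0 j)) \<and>
     (\<forall>u\<in>carr J. ccomp C (D1 u) (\<pi> (cdom J u)) = \<pi> (ccod J u))"

definition is_limit :: "('o, 'a) category \<Rightarrow> (nat, nat) category \<Rightarrow> (nat \<Rightarrow> 'o) \<Rightarrow> (nat \<Rightarrow> 'a)
                     \<Rightarrow> 'o \<Rightarrow> (nat \<Rightarrow> 'a) \<Rightarrow> bool" where
  "is_limit C J D0 D1 L \<pi> \<longleftrightarrow> cone C J D0 D1 L \<pi> \<and>
     (\<forall>L' \<pi>'. cone C J D0 D1 L' \<pi>' \<longrightarrow>
        (\<exists>!h. h \<in> hom C L' L \<and> (\<forall>j\<in>cobj J. ccomp C (\<pi> j) h = \<pi>' j)))"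

definition cocone :: "('o, 'a) category \<Rightarrow> (nat, nat) category \<Rightarrow> (nat \<Rightarrow> 'o) \<Rightarrow> (nat \<Rightarrow> 'a)
                     \<Rightarrow> 'o \<Rightarrow> (nat \<Rightarrow> 'a) \<Rightarrow> bool" where
  "cocone C J D0 D1 L \<iota> \<longleftrightarrow> L \<in> cobj C \<and>
     (\<forall>j\<in>cobj J. \<iota> j \<in> hom C (D0 j) L) \<and>
     (\<forall>u\<in>carr J. ccomp C (\<iota> (ccod J u)) (D1 u) = \<iota> (cdom J u))"

definition is_colimit :: "('o, 'a) category \<Rightarrow> (nat, nat) category \<Rightarrow> (nat \<Rightarrow> 'o) \<Rightarrow> (nat \<Rightarrow> 'a)
                     \<Rightarrow> 'o \<Rightarrow> (nat \<Rightarrow> 'a) \<Rightarrow> bool" where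
  "is_colimit C J D0 D1 L \<iota> \<longleftrightarrow> cocone C J D0 D1 L \<iota> \<and>
     (\<forall>L' \<iota>'. cocone C J D0 D1 L' \<iota>' \<longrightarrow>
        (\<exists>!h. h \<in> hom C L L' \<and> (\<forall>j\<in>cobj J. ccomp C h (\<iota> j) = \<iota>' j)))"

definition finite_category :: "(nat, nat) category \<Rightarrow> bool" where
  "finite_category J \<longleftrightarrow> category J \<and> finite (cobj J) \<and> finite (carr J)"

definition bicomplete :: "('o, 'a) category \<Rightarrow> bool" where
  "bicomplete C \<longleftrightarrow>
     (\<forall>J D0 D1. finite_category J \<and> functor J C D0 D1 \<longrightarrow> (\<exists>L \<pi>. is_limit C J D0 D1 L \<pi>)) \<and>
     (\<forall>J D0 D1. finite_category J \<and> functor J C D0 D1 \<longrightarrow> (\<exists>L \<iota>. is_colimit C J D0 D1 L \<iota>))"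

definition lifts :: "('o, 'a) category \<Rightarrow> 'a \<Rightarrow> 'a \<Rightarrow> bool" where
  "lifts C i p \<longleftrightarrow>
     (\<forall>u v. u \<in> hom C (cdom C i) (cdom C p) \<and> v \<in> hom C (ccod C i) (ccod C p) \<and>
            ccomp C p u = ccomp C v i \<longrightarrow>
        (\<exists>h \<in> hom C (ccod C i) (cdom C p). ccomp C h i = u \<and> ccomp C p h = v))"

definition wfs :: "('o, 'a) category \<Rightarrow> 'a set \<Rightarrow> 'a set \<Rightarrow> bool" where
  "wfs C L R \<longleftrightarrow> L \<subseteq> carr C \<and> R \<subseteq> carr C \<and>
     L = {i \<in> carr C. \<forall>p\<in>R. lifts C i p} \<and>
     R = {p \<in> carr C. \<forall>i\<in>L. lifts C i p} \<and>
     (\<forall>f\<in>carr C. \<exists>i\<in>L. \<exists>p\<in>R. ccod C i = cdom C p \<and> ccomp C p i = f)"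

definition subcategory :: "('o, 'a) category \<Rightarrow> 'a set \<Rightarrow> bool" where
  "subcategory C S \<longleftrightarrow> S \<subseteq> carr C \<and> (\<forall>x\<in>cobj C. cid C x \<in> S) \<and>
     (\<forall>f\<in>S. \<forall>g\<in>S. ccod C f = cdom C g \<longrightarrow> ccomp C g f \<in> S)"

definition two_out_of_three :: "('o, 'a) category \<Rightarrow> 'a set \<Rightarrow> bool" where
  "two_out_of_three C W \<longleftrightarrow>
     (\<forall>f\<in>carr C. \<forall>g\<in>carr C. ccod C f = cdom C g \<longrightarrow>
        ((f \<in> W \<and> g \<in> W \<longrightarrow> ccomp C g f \<in> W) \<and>
         (f \<in> W \<and> ccomp C g f \<in> W \<longrightarrow> g \<in> W) \<and>
         (g \<in> W \<and> ccomp C g f \<in> W \<longrightarrow> f \<in> W)))"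

definition model_structure :: "('o, 'a) category \<Rightarrow> 'a set \<Rightarrow> 'a set \<Rightarrow> 'a set \<Rightarrow> bool" where
  "model_structure C We Cof Fib \<longleftrightarrow>
     subcategory C We \<and> subcategory C Cof \<and> subcategory C Fib \<and>
     wfs C Cof (Fib \<inter> We) \<and> wfs C (Cof \<inter> We) Fib \<and>
     two_out_of_three C We"

datatype E3 = Empty | Emid | Star

fun rank3 :: "E3 \<Rightarrow> nat" where
  "rank3 Empty = 0" | "rank3 Emid = 1" | "rank3 Star = 2"

definition Eprime :: "(E3, E3 \<times> E3) category" where
  "Eprime = \<lparr> cobj = UNIV, carr = {(a, b). rank3 a \<le> rank3 b},
              cdom = fst, ccod = snd, cid = (\<lambda>x. (x, x)),
              ccomp = (\<lambda>g f. (fst f, snd g)) \<rparr>"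

end

theory Submission
  imports Defs
begin

text \<open>A map whose codomain is not sent to \<open>\<emptyset>\<close> admits no commutative square against a map
between objects sent to \<open>\<emptyset>\<close>, as only \<open>\<emptyset>\<close> maps to \<open>\<emptyset>\<close> in \<open>\<emptyset> \<rightarrow> E \<rightarrow> *\<close>; dually for \<open>*\<close>. So the
lifting properties hold vacuously, and since every map lies in one of the two classes, each
factorization is a composite with an identity. Both weak factorization systems thus arise from a
covering of all maps by adjoining the isomorphisms.\<close>

lemma
  assumes "category C"
  shows cdom_in_cobj: "f \<in> carr C \<Longrightarrow> cdom C f \<in> cobj C"
    and ccod_in_cobj: "f \<in> carr C \<Longrightarrow> ccod C f \<in> cobj C"
    and cid_in_carr: "x \<in> cobj C \<Longrightarrow> cid C x \<in> carr C"
    and cdom_cid: "x \<in> cobj C \<Longrightarrow> cdom C (cid C x) = x"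
    and ccod_cid: "x \<in> cobj C \<Longrightarrow> ccod C (cid C x) = x"
    and comp_in_carr: "\<lbrakk>f \<in> carr C; g \<in> carr C; ccod C f = cdom C g\<rbrakk> \<Longrightarrow> ccomp C g f \<in> carr C"
    and cdom_comp: "\<lbrakk>f \<in> carr C; g \<in> carr C; ccod C f = cdom C g\<rbrakk> \<Longrightarrow> cdom C (ccomp C g f) = cdom C f"
    and ccod_comp: "\<lbrakk>f \<in> carr C; g \<in> carr C; ccod C f = cdom C g\<rbrakk> \<Longrightarrow> ccod C (ccomp C g f) = ccod C g"
    and comp_cid_right: "f \<in> carr C \<Longrightarrow> ccomp C f (cid C (cdom C f)) = f"
    and comp_cid_left: "f \<in> carr C \<Longrightarrow> ccomp C (cid C (ccod C f)) f = f"
    and comp_assoc: "\<lbrakk>f \<in> carr C; g \<in> carr C; h \<in> carr C; ccod C f = cdom C g; ccod C g = cdom C h\<rbrakk>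
                       \<Longrightarrow> ccomp C h (ccomp C g f) = ccomp C (ccomp C h g) f"
  using assms unfolding category_def by blast+

lemma iso_subset_carr: "iso C \<subseteq> carr C"
  unfolding iso_def by auto

lemma isoI:
  assumes "f \<in> carr C" "g \<in> carr C" "cdom C g = ccod C f" "ccod C g = cdom C f"
    "ccomp C g f = cid C (cdom C f)" "ccomp C f g = cid C (ccod C f)"
  shows "f \<in> iso C"
  using assms unfolding iso_def hom_def by auto

lemma isoE:
  assumes "f \<in> iso C"
  obtains g where "f \<in> carr C" "g \<in> carr C" "cdom C g = ccod C f" "ccod C g = cdom C f"
    "ccomp C g f = cid C (cdom C f)" "ccomp C f g = cid C (ccod C f)"
  using assms unfolding iso_def hom_def by auto

lemma cid_iso:
  assumes C: "category C" and x: "x \<in> cobj C"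
  shows "cid C x \<in> iso C"
proof -
  have "ccomp C (cid C x) (cid C x) = cid C x"
    using comp_cid_right[OF C cid_in_carr[OF C x]] cdom_cid[OF C x] by simp
  then show ?thesis
    using cid_in_carr[OF C x] cdom_cid[OF C x] ccod_cid[OF C x] by (intro isoI) simp_all
qed

lemma iso_comp:
  assumes C: "category C" and "f \<in> iso C" "g \<in> iso C" and fg: "ccod C f = cdom C g"
  shows "ccomp C g f \<in> iso C"
proof -
  obtain f' where f: "f \<in> carr C" "f' \<in> carr C" "cdom C f' = ccod C f" "ccod C f' = cdom C f"
    "ccomp C f' f = cid C (cdom C f)" "ccomp C f f' = cid C (ccod C f)"
    using \<open>f \<in> iso C\<close> by (rule isoE)
  obtain g' where g: "g \<in> carr C" "g' \<in> carr C" "cdom C g' = ccod C g" "ccod C g' = cdom C g"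
    "ccomp C g' g = cid C (cdom C g)" "ccomp C g g' = cid C (ccod C g)"
    using \<open>g \<in> iso C\<close> by (rule isoE)
  have gf: "ccomp C g f \<in> carr C" "cdom C (ccomp C g f) = cdom C f" "ccod C (ccomp C g f) = ccod C g"
    using comp_in_carr[OF C] cdom_comp[OF C] ccod_comp[OF C] f g fg by auto
  have inv: "ccomp C f' g' \<in> carr C" "cdom C (ccomp C f' g') = ccod C g" "ccod C (ccomp C f' g') = cdom C f"
    using comp_in_carr[OF C] cdom_comp[OF C] ccod_comp[OF C] f g fg by auto
  have "ccomp C (ccomp C f' g') (ccomp C g f) = ccomp C f' (ccomp C (ccomp C g' g) f)"
    using comp_assoc[OF C gf(1) g(2) f(2)] comp_assoc[OF C f(1) g(1) g(2)] f g fg gf by simp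
  also have "\<dots> = cid C (cdom C (ccomp C g f))"
    using comp_cid_left[OF C f(1)] f g fg gf by simp
  finally have left: "ccomp C (ccomp C f' g') (ccomp C g f) = cid C (cdom C (ccomp C g f))" .
  have "ccomp C (ccomp C g f) (ccomp C f' g') = ccomp C g (ccomp C (ccomp C f f') g')"
    using comp_assoc[OF C inv(1) f(1) g(1)] comp_assoc[OF C g(2) f(2) f(1)] f g fg inv by simp
  also have "\<dots> = cid C (ccod C (ccomp C g f))"
    using comp_cid_left[OF C g(2)] f g fg gf by simp
  finally have right: "ccomp C (ccomp C g f) (ccomp C f' g') = cid C (ccod C (ccomp C g f))" .
  show ?thesis
    using gf inv by (intro isoI[OF _ _ _ _ left right]) simp_all
qed

lemma iso_inverse_iso:
  assumes "f \<in> carr C" "g \<in> carr C" "cdom C g = ccod C f" "ccod C g = cdom C f"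
    "ccomp C g f = cid C (cdom C f)" "ccomp C f g = cid C (ccod C f)"
  shows "g \<in> iso C"
  using assms by (intro isoI[where g = f]) simp_all

lemma iso_cancel_left:
  assumes C: "category C" and "f \<in> iso C" "g \<in> carr C" and fg: "ccod C f = cdom C g"
    and "ccomp C g f \<in> iso C"
  shows "g \<in> iso C"
proof -
  obtain f' where f: "f \<in> carr C" "f' \<in> carr C" "cdom C f' = ccod C f" "ccod C f' = cdom C f"
    "ccomp C f' f = cid C (cdom C f)" "ccomp C f f' = cid C (ccod C f)"
    using \<open>f \<in> iso C\<close> by (rule isoE)
  have gf: "ccomp C g f \<in> carr C" "cdom C (ccomp C g f) = cdom C f" "ccod C (ccomp C g f) = ccod C g"
    using comp_in_carr[OF C] cdom_comp[OF C] ccod_comp[OF C] f \<open>g \<in> carr C\<close> fg by auto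
  have "g = ccomp C g (ccomp C f f')"
    using comp_cid_right[OF C \<open>g \<in> carr C\<close>] f fg by simp
  also have "\<dots> = ccomp C (ccomp C g f) f'"
    using comp_assoc[OF C f(2) f(1) \<open>g \<in> carr C\<close>] f fg by simp
  also have "\<dots> \<in> iso C"
    using iso_comp[OF C iso_inverse_iso[OF f] \<open>ccomp C g f \<in> iso C\<close>] f gf by simp
  finally show ?thesis .
qed

lemma iso_cancel_right:
  assumes C: "category C" and "f \<in> carr C" "g \<in> iso C" and fg: "ccod C f = cdom C g"
    and "ccomp C g f \<in> iso C"
  shows "f \<in> iso C"
proof -
  obtain g' where g: "g \<in> carr C" "g' \<in> carr C" "cdom C g' = ccod C g" "ccod C g' = cdom C g"
    "ccomp C g' g = cid C (cdom C g)" "ccomp C g g' = cid C (ccod C g)"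
    using \<open>g \<in> iso C\<close> by (rule isoE)
  have gf: "ccomp C g f \<in> carr C" "cdom C (ccomp C g f) = cdom C f" "ccod C (ccomp C g f) = ccod C g"
    using comp_in_carr[OF C] cdom_comp[OF C] ccod_comp[OF C] g \<open>f \<in> carr C\<close> fg by auto
  have "f = ccomp C (ccomp C g' g) f"
    using comp_cid_left[OF C \<open>f \<in> carr C\<close>] g fg by simp
  also have "\<dots> = ccomp C g' (ccomp C g f)"
    using comp_assoc[OF C \<open>f \<in> carr C\<close> g(1) g(2)] g fg by simp
  also have "\<dots> \<in> iso C"
    using iso_comp[OF C \<open>ccomp C g f \<in> iso C\<close> iso_inverse_iso[OF g]] g gf by simp
  finally show ?thesis .
qed

lemma iso_if_lifts_self:
  assumes C: "category C" and f: "f \<in> carr C" and "lifts C f f"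
  shows "f \<in> iso C"
proof -
  have "cid C (cdom C f) \<in> hom C (cdom C f) (cdom C f)" "cid C (ccod C f) \<in> hom C (ccod C f) (ccod C f)"
       "ccomp C f (cid C (cdom C f)) = ccomp C (cid C (ccod C f)) f"
    using cdom_in_cobj[OF C f] ccod_in_cobj[OF C f] cid_in_carr[OF C] cdom_cid[OF C] ccod_cid[OF C]
      comp_cid_right[OF C f] comp_cid_left[OF C f] unfolding hom_def by auto
  then obtain h where "h \<in> hom C (ccod C f) (cdom C f)"
      "ccomp C h f = cid C (cdom C f)" "ccomp C f h = cid C (ccod C f)"
    using \<open>lifts C f f\<close> unfolding lifts_def by blast
  then show ?thesis
    using f unfolding iso_def by auto
qed

lemma iso_lifts:
  assumes C: "category C" and "i \<in> iso C" "p \<in> carr C"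
  shows "lifts C i p"
  unfolding lifts_def
proof (intro allI impI)
  fix u v
  assume "u \<in> hom C (cdom C i) (cdom C p) \<and> v \<in> hom C (ccod C i) (ccod C p) \<and> ccomp C p u = ccomp C v i"
  then have u: "u \<in> carr C" "cdom C u = cdom C i" "ccod C u = cdom C p"
    and v: "v \<in> carr C" "cdom C v = ccod C i" "ccod C v = ccod C p"
    and square: "ccomp C p u = ccomp C v i"
    unfolding hom_def by auto
  obtain i' where i: "i \<in> carr C" "i' \<in> carr C" "cdom C i' = ccod C i" "ccod C i' = cdom C i"
    "ccomp C i' i = cid C (cdom C i)" "ccomp C i i' = cid C (ccod C i)"
    using \<open>i \<in> iso C\<close> by (rule isoE)
  have h: "ccomp C u i' \<in> carr C" "cdom C (ccomp C u i') = ccod C i" "ccod C (ccomp C u i') = cdom C p"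
    using comp_in_carr[OF C] cdom_comp[OF C] ccod_comp[OF C] i u by auto
  have "ccomp C (ccomp C u i') i = ccomp C u (ccomp C i' i)"
    using comp_assoc[OF C i(1,2) u(1)] i u by simp
  also have "\<dots> = u"
    using comp_cid_right[OF C u(1)] i u by simp
  finally have upper: "ccomp C (ccomp C u i') i = u" .
  have "ccomp C p (ccomp C u i') = ccomp C (ccomp C v i) i'"
    using comp_assoc[OF C i(2) u(1) \<open>p \<in> carr C\<close>] i u square by simp
  also have "\<dots> = v"
    using comp_assoc[OF C i(2,1) v(1)] comp_cid_right[OF C v(1)] i v by simp
  finally have lower: "ccomp C p (ccomp C u i') = v" .
  show "\<exists>h\<in>hom C (ccod C i) (cdom C p). ccomp C h i = u \<and> ccomp C p h = v"
    using h upper lower unfolding hom_def by blast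
qed

lemma lifts_iso:
  assumes C: "category C" and "i \<in> carr C" "p \<in> iso C"
  shows "lifts C i p"
  unfolding lifts_def
proof (intro allI impI)
  fix u v
  assume "u \<in> hom C (cdom C i) (cdom C p) \<and> v \<in> hom C (ccod C i) (ccod C p) \<and> ccomp C p u = ccomp C v i"
  then have u: "u \<in> carr C" "cdom C u = cdom C i" "ccod C u = cdom C p"
    and v: "v \<in> carr C" "cdom C v = ccod C i" "ccod C v = ccod C p"
    and square: "ccomp C p u = ccomp C v i"
    unfolding hom_def by auto
  obtain p' where p: "p \<in> carr C" "p' \<in> carr C" "cdom C p' = ccod C p" "ccod C p' = cdom C p"
    "ccomp C p' p = cid C (cdom C p)" "ccomp C p p' = cid C (ccod C p)"
    using \<open>p \<in> iso C\<close> by (rule isoE)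
  have h: "ccomp C p' v \<in> carr C" "cdom C (ccomp C p' v) = ccod C i" "ccod C (ccomp C p' v) = cdom C p"
    using comp_in_carr[OF C] cdom_comp[OF C] ccod_comp[OF C] p v by auto
  have "ccomp C (ccomp C p' v) i = ccomp C p' (ccomp C p u)"
    using comp_assoc[OF C \<open>i \<in> carr C\<close> v(1) p(2)] p v square by simp
  also have "\<dots> = u"
    using comp_assoc[OF C u(1) p(1,2)] comp_cid_left[OF C u(1)] p u by simp
  finally have upper: "ccomp C (ccomp C p' v) i = u" .
  have "ccomp C p (ccomp C p' v) = ccomp C (ccomp C p p') v"
    using comp_assoc[OF C v(1) p(2,1)] p v by simp
  also have "\<dots> = v"
    using comp_cid_left[OF C v(1)] p v by simp
  finally have lower: "ccomp C p (ccomp C p' v) = v" .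
  show "\<exists>h\<in>hom C (ccod C i) (cdom C p). ccomp C h i = u \<and> ccomp C p h = v"
    using h upper lower unfolding hom_def by blast
qed

lemma lifts_vacuous:
  assumes "hom C (cdom C i) (cdom C p) = {} \<or> hom C (ccod C i) (ccod C p) = {}"
  shows "lifts C i p"
  using assms unfolding lifts_def by blast

lemma subcategory_Un_iso:
  assumes C: "category C"
    and inv: "\<And>f. f \<in> iso C \<Longrightarrow> \<phi> (cdom C f) = \<phi> (ccod C f)"
    and "transp R"
  shows "subcategory C ({f \<in> carr C. R (\<phi> (cdom C f)) (\<phi> (ccod C f))} \<union> iso C)"
  unfolding subcategory_def
proof (intro conjI ballI impI)
  show "{f \<in> carr C. R (\<phi> (cdom C f)) (\<phi> (ccod C f))} \<union> iso C \<subseteq> carr C"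
    using iso_subset_carr[of C] by blast
  show "cid C x \<in> {f \<in> carr C. R (\<phi> (cdom C f)) (\<phi> (ccod C f))} \<union> iso C" if "x \<in> cobj C" for x
    using cid_iso[OF C that] by blast
  fix f g
  assume f: "f \<in> {f \<in> carr C. R (\<phi> (cdom C f)) (\<phi> (ccod C f))} \<union> iso C"
    and g: "g \<in> {f \<in> carr C. R (\<phi> (cdom C f)) (\<phi> (ccod C f))} \<union> iso C"
    and fg: "ccod C f = cdom C g"
  have carr: "f \<in> carr C" "g \<in> carr C"
    using f g iso_subset_carr[of C] by blast+
  show "ccomp C g f \<in> {f \<in> carr C. R (\<phi> (cdom C f)) (\<phi> (ccod C f))} \<union> iso C"
  proof (cases "f \<in> iso C \<and> g \<in> iso C")
    case True
    then show ?thesis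
      using iso_comp[OF C _ _ fg] by blast
  next
    case False
    have Rf: "f \<notin> iso C \<Longrightarrow> R (\<phi> (cdom C f)) (\<phi> (cdom C g))"
      and Rg: "g \<notin> iso C \<Longrightarrow> R (\<phi> (cdom C g)) (\<phi> (ccod C g))"
      using f g fg by auto
    have "R (\<phi> (cdom C f)) (\<phi> (ccod C g))"
    proof (cases "f \<in> iso C")
      case True
      then show ?thesis using False Rg inv[of f] fg by simp
    next
      case f_not_iso: False
      show ?thesis
      proof (cases "g \<in> iso C")
        case True
        then show ?thesis using Rf[OF f_not_iso] inv[of g] by simp
      next
        case False
        then show ?thesis using Rf[OF f_not_iso] Rg transpD[OF \<open>transp R\<close>] by blast
      qed
    qed
    then show ?thesis
      using comp_in_carr[OF C carr fg] cdom_comp[OF C carr fg] ccod_comp[OF C carr fg] by simp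
  qed
qed

lemma two_out_of_three_Un_iso:
  assumes C: "category C"
    and inv: "\<And>f. f \<in> iso C \<Longrightarrow> \<phi> (cdom C f) = \<phi> (ccod C f)"
  shows "two_out_of_three C
           ({f \<in> carr C. \<phi> (cdom C f) = \<phi> (ccod C f) \<and> \<phi> (cdom C f) \<in> K} \<union> iso C)"
    (is "two_out_of_three C ?W")
  unfolding two_out_of_three_def
proof (intro ballI impI conjI)
  fix f g
  assume carr: "f \<in> carr C" "g \<in> carr C" and fg: "ccod C f = cdom C g"
  have gf: "ccomp C g f \<in> carr C" "cdom C (ccomp C g f) = cdom C f" "ccod C (ccomp C g f) = ccod C g"
    using comp_in_carr[OF C carr fg] cdom_comp[OF C carr fg] ccod_comp[OF C carr fg] by simp_all
  have "subcategory C ?W"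
    by (rule subcategory_Un_iso[OF C inv]) (auto intro: transpI)
  then show "f \<in> ?W \<and> g \<in> ?W \<Longrightarrow> ccomp C g f \<in> ?W"
    using fg unfolding subcategory_def by blast
  show "g \<in> ?W" if "f \<in> ?W \<and> ccomp C g f \<in> ?W"
  proof (cases "f \<in> iso C \<and> ccomp C g f \<in> iso C")
    case True
    then show ?thesis
      using iso_cancel_left[OF C _ carr(2) fg] by blast
  next
    case False
    then show ?thesis
      using that inv[of f] inv[of "ccomp C g f"] gf fg carr(2) by auto
  qed
  show "f \<in> ?W" if "g \<in> ?W \<and> ccomp C g f \<in> ?W"
  proof (cases "g \<in> iso C \<and> ccomp C g f \<in> iso C")
    case True
    then show ?thesis
      using iso_cancel_right[OF C carr(1) _ fg] by blast
  next
    case False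
    then show ?thesis
      using that inv[of g] inv[of "ccomp C g f"] gf fg carr(1) by auto
  qed
qed

lemma lifting_class_Un_iso:
  assumes C: "category C" and "P \<subseteq> carr C" "Q \<subseteq> carr C"
    and "\<And>i p. i \<in> P \<Longrightarrow> p \<in> Q \<Longrightarrow> lifts C i p"
    and "carr C \<subseteq> P \<union> Q"
  shows "P \<union> iso C = {i \<in> carr C. \<forall>p\<in>Q \<union> iso C. lifts C i p}"
    and "Q \<union> iso C = {p \<in> carr C. \<forall>i\<in>P \<union> iso C. lifts C i p}"
  \<comment> \<open>a map of the lifting closure outside \<open>P\<close> lies in \<open>Q\<close>, so it lifts against itself\<close>
  using assms iso_subset_carr[of C] iso_lifts[OF C] lifts_iso[OF C] iso_if_lifts_self[OF C]
  by blast+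

lemma wfs_Un_iso:
  assumes C: "category C" and "P \<subseteq> carr C" "Q \<subseteq> carr C"
    and "\<And>i p. i \<in> P \<Longrightarrow> p \<in> Q \<Longrightarrow> lifts C i p"
    and cover: "carr C \<subseteq> P \<union> Q"
  shows "wfs C (P \<union> iso C) (Q \<union> iso C)"
proof -
  have "\<exists>i\<in>P \<union> iso C. \<exists>p\<in>Q \<union> iso C. ccod C i = cdom C p \<and> ccomp C p i = f"
    if f: "f \<in> carr C" for f
  proof (cases "f \<in> P")
    case True
    have "cid C (ccod C f) \<in> Q \<union> iso C" "cdom C (cid C (ccod C f)) = ccod C f"
      using cid_iso[OF C ccod_in_cobj[OF C f]] cdom_cid[OF C ccod_in_cobj[OF C f]] by simp_all
    then show ?thesis
      using True comp_cid_left[OF C f] by (intro bexI[of _ f] bexI[of _ "cid C (ccod C f)"]) auto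
  next
    case False
    have "f \<in> Q \<union> iso C"
      using False cover f by blast
    moreover have "cid C (cdom C f) \<in> P \<union> iso C" "ccod C (cid C (cdom C f)) = cdom C f"
      using cid_iso[OF C cdom_in_cobj[OF C f]] ccod_cid[OF C cdom_in_cobj[OF C f]] by simp_all
    ultimately show ?thesis
      using comp_cid_right[OF C f] by (intro bexI[of _ "cid C (cdom C f)"] bexI[of _ f]) auto
  qed
  then show ?thesis
    unfolding wfs_def using lifting_class_Un_iso[OF assms] assms(2,3) iso_subset_carr[of C] by blast
qed

lemma functor_Eprime_arr:
  assumes "functor C Eprime F0 F1" "f \<in> carr C"
  shows "F1 f = (F0 (cdom C f), F0 (ccod C f))"
    and "rank3 (F0 (cdom C f)) \<le> rank3 (F0 (ccod C f))"
  using assms unfolding functor_def hom_def Eprime_def by auto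

lemma functor_Eprime_hom:
  assumes "functor C Eprime F0 F1" "f \<in> hom C x y"
  shows "rank3 (F0 x) \<le> rank3 (F0 y)"
  using assms functor_Eprime_arr(2)[OF assms(1)] unfolding hom_def by auto

lemma functor_Eprime_iso:
  assumes "functor C Eprime F0 F1" "f \<in> iso C"
  shows "F0 (cdom C f) = F0 (ccod C f)"
proof -
  obtain g where "f \<in> carr C" "g \<in> carr C" "cdom C g = ccod C f" "ccod C g = cdom C f"
    using assms(2) by (rule isoE)
  then show ?thesis
    using functor_Eprime_arr(2)[OF assms(1)]
    by (cases "F0 (cdom C f)"; cases "F0 (ccod C f)") fastforce+
qed

lemma rank3_eq_0_iff [simp]: "rank3 a = 0 \<longleftrightarrow> a = Empty"
  by (cases a) simp_all

lemma rank3_ge_2_iff [simp]: "2 \<le> rank3 a \<longleftrightarrow> a = Star"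
  by (cases a) simp_all

lemma wfs_Eprime_cofibrations:
  assumes C: "category C" and F: "functor C Eprime F0 F1"
  shows "wfs C ({f \<in> carr C. F0 (ccod C f) \<noteq> Empty} \<union> iso C)
               ({f \<in> carr C. F0 (cdom C f) = Empty \<and> F0 (ccod C f) = Empty} \<union> iso C)"
proof (rule wfs_Un_iso[OF C])
  fix i p
  assume "i \<in> {f \<in> carr C. F0 (ccod C f) \<noteq> Empty}"
    and "p \<in> {f \<in> carr C. F0 (cdom C f) = Empty \<and> F0 (ccod C f) = Empty}"
  then have "hom C (ccod C i) (ccod C p) = {}"
    using functor_Eprime_hom[OF F, of _ "ccod C i" "ccod C p"] by auto
  then show "lifts C i p"
    by (intro lifts_vacuous) simp
next
  show "carr C \<subseteq> {f \<in> carr C. F0 (ccod C f) \<noteq> Empty} \<union>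
                  {f \<in> carr C. F0 (cdom C f) = Empty \<and> F0 (ccod C f) = Empty}"
    using functor_Eprime_arr(2)[OF F] by fastforce
qed auto

lemma wfs_Eprime_fibrations:
  assumes C: "category C" and F: "functor C Eprime F0 F1"
  shows "wfs C ({f \<in> carr C. F0 (cdom C f) = Star \<and> F0 (ccod C f) = Star} \<union> iso C)
               ({f \<in> carr C. F0 (cdom C f) \<noteq> Star} \<union> iso C)"
proof (rule wfs_Un_iso[OF C])
  fix i p
  assume "i \<in> {f \<in> carr C. F0 (cdom C f) = Star \<and> F0 (ccod C f) = Star}"
    and "p \<in> {f \<in> carr C. F0 (cdom C f) \<noteq> Star}"
  then have "hom C (cdom C i) (cdom C p) = {}"
    using functor_Eprime_hom[OF F, of _ "cdom C i" "cdom C p"] by auto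
  then show "lifts C i p"
    by (intro lifts_vacuous) simp
next
  show "carr C \<subseteq> {f \<in> carr C. F0 (cdom C f) = Star \<and> F0 (ccod C f) = Star} \<union>
                  {f \<in> carr C. F0 (cdom C f) \<noteq> Star}"
    using functor_Eprime_arr(2)[OF F] by fastforce
qed auto

theorem proposition4:
  fixes C :: "('o, 'a) category"
    and F0 :: "'o \<Rightarrow> E3" and F1 :: "'a \<Rightarrow> E3 \<times> E3"
  assumes "category C"
    and "bicomplete C"
    and "functor C Eprime F0 F1"
  shows "model_structure C
           ({f \<in> carr C. F1 f = cid Eprime Empty \<or> F1 f = cid Eprime Star} \<union> iso C)
           ({f \<in> carr C. F0 (ccod C f) \<noteq> Empty} \<union> iso C)
           ({f \<in> carr C. F0 (cdom C f) \<noteq> Star} \<union> iso C)"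
proof -
  note C = \<open>category C\<close> and F = \<open>functor C Eprime F0 F1\<close>
  note inv = functor_Eprime_iso[OF F]
  let ?W = "{f \<in> carr C. F0 (cdom C f) = F0 (ccod C f) \<and> F0 (cdom C f) \<in> {Empty, Star}} \<union> iso C"
  let ?Cof = "{f \<in> carr C. F0 (ccod C f) \<noteq> Empty} \<union> iso C"
  let ?Fib = "{f \<in> carr C. F0 (cdom C f) \<noteq> Star} \<union> iso C"
  have trivial_fibrations:
      "?Fib \<inter> ?W = {f \<in> carr C. F0 (cdom C f) = Empty \<and> F0 (ccod C f) = Empty} \<union> iso C"
    and trivial_cofibrations:
      "?Cof \<inter> ?W = {f \<in> carr C. F0 (cdom C f) = Star \<and> F0 (ccod C f) = Star} \<union> iso C"
    by auto
  have "{f \<in> carr C. F1 f = cid Eprime Empty \<or> F1 f = cid Eprime Star} \<union> iso C = ?W"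
    using functor_Eprime_arr(1)[OF F] unfolding Eprime_def by auto
  moreover have "subcategory C ?W" "subcategory C ?Cof" "subcategory C ?Fib"
    by (rule subcategory_Un_iso[OF C inv]; auto intro: transpI)+
  moreover have "wfs C ?Cof (?Fib \<inter> ?W)" "wfs C (?Cof \<inter> ?W) ?Fib"
    unfolding trivial_fibrations trivial_cofibrations
    using wfs_Eprime_cofibrations[OF C F] wfs_Eprime_fibrations[OF C F] .
  moreover have "two_out_of_three C ?W"
    by (rule two_out_of_three_Un_iso[OF C inv])
  ultimately show ?thesis
    unfolding model_structure_def by simp
qed

end
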